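(* Let $G = [V_1]H_1 \times \dots \times [V_n]H_n$ be a direct product of type 1 primitive groups $[V_i]H_i$ such that $|H_i| > |V_i|$ for each $i$. Then $G$ has Property A.
   Context: All groups are finite. A type 1 primitive group is a semidirect product $[V]H$ where $V$ is a non-trivial finite vector space over a field of prime order (an elementary abelian group) and $H$ is a subgroup of $\mathrm{Aut}(V)$ acting irreducibly on $V$, with the natural action. A group $G$ has Property A if for every non-trivial abelian normal subgroup $A$ of $G$, $|G/C_G(A)| > |A|$. *)

theory Defs
  imports "HOL-Algebra.Algebra"
begin

text \<open>A finite elementary abelian p-group, i.e. a non-trivial finite vector space over the
  prime field F_p, viewed as an additive (here: multiplicatively written) group.\<close>
definition elementary_abelian :: "('a, 'b) monoid_scheme \<Rightarrow> bool" where
  "elementary_abelian V \<longleftrightarrow> comm_group V \<and> finite (carrier V) \<and> carrier V \<noteq> {\<one>\<^bsub>V\<^esub>} \<and>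
     (\<exists>p::nat. Factorial_Ring.prime p \<and> (\<forall>x\<in>carrier V. x [^]\<^bsub>V\<^esub> p = \<one>\<^bsub>V\<^esub>))"

text \<open>H (a subgroup of Aut(V), given by its set of automorphisms) acts irreducibly on V:
  the only H-invariant subgroups (= F_p-subspaces) are trivial and V.\<close>
definition acts_irreducibly :: "('a, 'b) monoid_scheme \<Rightarrow> ('a \<Rightarrow> 'a) set \<Rightarrow> bool" where
  "acts_irreducibly V H \<longleftrightarrow>
     (\<forall>W. subgroup W V \<and> (\<forall>h\<in>H. h ` W \<subseteq> W) \<longrightarrow> W = {\<one>\<^bsub>V\<^esub>} \<or> W = carrier V)"

definition semidirect :: "('a, 'b) monoid_scheme \<Rightarrow> ('a \<Rightarrow> 'a) set \<Rightarrow> ('a \<times> ('a \<Rightarrow> 'a)) monoid" where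
  "semidirect V H = \<lparr>carrier = carrier V \<times> H,
     monoid.mult = (\<lambda>(v, h) (w, k). (v \<otimes>\<^bsub>V\<^esub> h w, compose (carrier V) h k)),
     one = (\<one>\<^bsub>V\<^esub>, restrict id (carrier V))\<rparr>"

definition type1_primitive_data :: "('a, 'b) monoid_scheme \<Rightarrow> ('a \<Rightarrow> 'a) set \<Rightarrow> bool" where
  "type1_primitive_data V H \<longleftrightarrow> elementary_abelian V \<and> subgroup H (AutoGroup V) \<and>
     acts_irreducibly V H"

definition centralizer :: "('a, 'b) monoid_scheme \<Rightarrow> 'a set \<Rightarrow> 'a set" where
  "centralizer G A = {g \<in> carrier G. \<forall>a\<in>A. g \<otimes>\<^bsub>G\<^esub> a = a \<otimes>\<^bsub>G\<^esub> g}"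

definition property_A :: "('a, 'b) monoid_scheme \<Rightarrow> bool" where
  "property_A G \<longleftrightarrow> (\<forall>A. A \<lhd> G \<and> (\<forall>x\<in>A. \<forall>y\<in>A. x \<otimes>\<^bsub>G\<^esub> y = y \<otimes>\<^bsub>G\<^esub> x) \<and> A \<noteq> {\<one>\<^bsub>G\<^esub>}
       \<longrightarrow> order (G Mod centralizer G A) > card A)"

end

theory Submission
  imports Defs
begin

text \<open>
  Since |G : C_G(A)| |C_G(A)| = |G|, Property A for a finite group G says |C_G(A)| |A| < |G| for
  every non-trivial abelian normal subgroup A. This bound passes to finite direct products:
  A and C_G(A) embed into the products of the projections A_i and of their
  centralizers, each factor satisfies |C(A_i)| |A_i| \<le> |G_i|, and the inequality is strict in
  a coordinate where A_i is non-trivial.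

  For [V]H with H irreducible on V, the elements of V contained in an abelian normal subgroup N
  form an H-invariant subspace, hence either 1 or V. In the first case [V, N] \<subseteq> N \<inter> V = 1,
  in the second N \<supseteq> V is abelian; either way N centralizes V, which forces N \<subseteq> V. If N \<noteq> 1
  we are in the second case, so C(N) \<subseteq> C(V) = V. Thus |C(N)| |N| \<le> |V|^2 < |V| |H|.
\<close>

lemma (in group) commutator_eq_one_imp_commute:
  assumes "x \<in> carrier G" "y \<in> carrier G" "x \<otimes> y \<otimes> inv x \<otimes> inv y = \<one>"
  shows "x \<otimes> y = y \<otimes> x"
  using assms by (simp add: inv_solve_right')

lemma centralizer_subgroup:
  fixes G (structure)
  assumes "group G" and "Y \<subseteq> carrier G"
  shows "subgroup (centralizer G Y) G"
proof -
  interpret group G by (rule assms(1))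
  show ?thesis
  proof
    show "centralizer G Y \<subseteq> carrier G" by (auto simp: centralizer_def)
  next
    fix g h assume g: "g \<in> centralizer G Y" and h: "h \<in> centralizer G Y"
    have "g \<otimes> h \<otimes> a = a \<otimes> (g \<otimes> h)" if "a \<in> Y" for a
    proof -
      have "a \<in> carrier G" "g \<in> carrier G" "h \<in> carrier G"
        using that assms(2) g h by (auto simp: centralizer_def)
      moreover have "g \<otimes> a = a \<otimes> g" "h \<otimes> a = a \<otimes> h" using g h that by (auto simp: centralizer_def)
      ultimately show ?thesis by (metis m_assoc)
    qed
    then show "g \<otimes> h \<in> centralizer G Y" using g h by (auto simp: centralizer_def)
  next
    show "\<one> \<in> centralizer G Y" using assms(2) by (auto simp: centralizer_def)
  next
    fix g assume g: "g \<in> centralizer G Y"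
    have "inv g \<otimes> a = a \<otimes> inv g" if "a \<in> Y" for a
    proof -
      have "a \<in> carrier G" "g \<in> carrier G" using that assms(2) g by (auto simp: centralizer_def)
      moreover have "g \<otimes> a = a \<otimes> g" using g that by (simp add: centralizer_def)
      ultimately have "inv g \<otimes> a = inv g \<otimes> (a \<otimes> g) \<otimes> inv g"
        by (simp add: m_assoc)
      also have "\<dots> = inv g \<otimes> (g \<otimes> a) \<otimes> inv g" using \<open>g \<otimes> a = a \<otimes> g\<close> by simp
      also have "\<dots> = a \<otimes> inv g" using \<open>a \<in> carrier G\<close> \<open>g \<in> carrier G\<close> by (simp flip: m_assoc)
      finally show ?thesis .
    qed
    then show "inv g \<in> centralizer G Y" using g by (auto simp: centralizer_def)
  qed
qed

lemma (in group) property_A_iff_card_centralizer: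
  assumes "finite (carrier G)"
  shows "property_A G \<longleftrightarrow> (\<forall>A. A \<lhd> G \<and> (\<forall>x\<in>A. \<forall>y\<in>A. x \<otimes> y = y \<otimes> x) \<and> A \<noteq> {\<one>}
           \<longrightarrow> card (centralizer G A) * card A < order G)"
proof -
  have "card A < order (G Mod centralizer G A) \<longleftrightarrow> card (centralizer G A) * card A < order G"
    if "A \<lhd> G" for A
  proof -
    have C: "subgroup (centralizer G A) G"
      using centralizer_subgroup[OF is_group normal_imp_subgroup[OF that, THEN subgroup.subset]] .
    then have "0 < card (centralizer G A)"
      using assms finite_subset[OF subgroup.subset] subgroup.one_closed card_gt_0_iff by blast
    moreover have "order (G Mod centralizer G A) * card (centralizer G A) = order G"
      using lagrange[OF C] by (simp add: FactGroup_def order_def)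
    ultimately show ?thesis by (metis mult.commute mult_less_mono2 nat_mult_less_cancel_disj)
  qed
  then show ?thesis unfolding property_A_def by blast
qed

lemma (in group) property_A_card_centralizer_le:
  assumes "finite (carrier G)" "property_A G" "A \<lhd> G" "\<forall>x\<in>A. \<forall>y\<in>A. x \<otimes> y = y \<otimes> x"
  shows "card (centralizer G A) * card A \<le> order G"
proof (cases "A = {\<one>}")
  case True
  then have "centralizer G A = carrier G" by (auto simp: centralizer_def)
  with True show ?thesis by (simp add: order_def)
next
  case False
  with assms show ?thesis by (simp add: property_A_iff_card_centralizer less_imp_le)
qed

lemma normal_projection_product_group:
  assumes groups: "\<And>i. i \<in> I \<Longrightarrow> group (G i)"
    and A: "A \<lhd> product_group I G" and i: "i \<in> I"
  shows "(\<lambda>f. f i) ` A \<lhd> G i"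
proof (rule normal.surj_hom_normal_subgroup[OF A])
  show "group_hom (product_group I G) (G i) (\<lambda>f. f i)"
    using groups i by (auto simp: group_hom_def group_hom_axioms_def hom_def)
  show "(\<lambda>f. f i) ` carrier (product_group I G) = carrier (G i)"
  proof (intro equalityI subsetI)
    fix x assume x: "x \<in> carrier (G i)"
    have "(\<lambda>j\<in>I. if j = i then x else \<one>\<^bsub>G j\<^esub>) \<in> carrier (product_group I G)"
      using x groups by (auto simp: monoid.one_closed group.is_monoid)
    then show "x \<in> (\<lambda>f. f i) ` carrier (product_group I G)"
      using i by (auto intro!: image_eqI[where x = "\<lambda>j\<in>I. if j = i then x else \<one>\<^bsub>G j\<^esub>"])
  qed (use i in auto)
qed

lemma centralizer_product_group_subset:
  assumes "A \<subseteq> carrier (product_group I G)"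
  shows "centralizer (product_group I G) A \<subseteq> (\<Pi>\<^sub>E i\<in>I. centralizer (G i) ((\<lambda>f. f i) ` A))"
proof
  fix g assume g: "g \<in> centralizer (product_group I G) A"
  have "g i \<otimes>\<^bsub>G i\<^esub> f i = f i \<otimes>\<^bsub>G i\<^esub> g i" if "i \<in> I" "f \<in> A" for i f
  proof -
    have "(\<lambda>i\<in>I. g i \<otimes>\<^bsub>G i\<^esub> f i) = (\<lambda>i\<in>I. f i \<otimes>\<^bsub>G i\<^esub> g i)"
      using g that by (auto simp: centralizer_def)
    from fun_cong[OF this, of i] show ?thesis using that by simp
  qed
  then show "g \<in> (\<Pi>\<^sub>E i\<in>I. centralizer (G i) ((\<lambda>f. f i) ` A))"
    using g by (auto simp: centralizer_def)
qed

theorem property_A_product_group: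
  assumes "finite I"
    and groups: "\<And>i. i \<in> I \<Longrightarrow> group (G i)"
    and finite: "\<And>i. i \<in> I \<Longrightarrow> finite (carrier (G i))"
    and property_A: "\<And>i. i \<in> I \<Longrightarrow> property_A (G i)"
  shows "property_A (product_group I G)"
proof -
  let ?G = "product_group I G"
  interpret group ?G using groups by simp
  have finite_G: "finite (carrier ?G)" using assms(1) finite by (simp add: finite_PiE)
  have "card (centralizer ?G A) * card A < order ?G"
    if A: "A \<lhd> ?G" and abelian: "\<forall>x\<in>A. \<forall>y\<in>A. x \<otimes>\<^bsub>?G\<^esub> y = y \<otimes>\<^bsub>?G\<^esub> x"
      and nontrivial: "A \<noteq> {\<one>\<^bsub>?G\<^esub>}" for A
  proof -
    define A\<^sub>i where "A\<^sub>i i = (\<lambda>f. f i) ` A" for i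
    define C\<^sub>i where "C\<^sub>i i = centralizer (G i) (A\<^sub>i i)" for i
    have A_carrier: "A \<subseteq> carrier ?G" using A normal_imp_subgroup subgroup.subset by blast
    have normal_i: "A\<^sub>i i \<lhd> G i" if "i \<in> I" for i
      unfolding A\<^sub>i_def using groups A that by (rule normal_projection_product_group)
    have abelian_i: "\<forall>x\<in>A\<^sub>i i. \<forall>y\<in>A\<^sub>i i. x \<otimes>\<^bsub>G i\<^esub> y = y \<otimes>\<^bsub>G i\<^esub> x" if "i \<in> I" for i
      using abelian that unfolding A\<^sub>i_def by (fastforce dest!: fun_cong[where x = i])
    have bound_i: "card (C\<^sub>i i) * card (A\<^sub>i i) \<le> card (carrier (G i))" if "i \<in> I" for i
      using group.property_A_card_centralizer_le[OF groups finite property_A normal_i abelian_i] that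
      by (simp add: C\<^sub>i_def order_def)
    obtain f where f: "f \<in> A" "f \<noteq> \<one>\<^bsub>?G\<^esub>"
      using nontrivial normal_imp_subgroup[OF A, THEN subgroup.one_closed] by blast
    have "\<exists>j\<in>I. f j \<noteq> \<one>\<^bsub>G j\<^esub>"
    proof (rule ccontr)
      assume "\<not> (\<exists>j\<in>I. f j \<noteq> \<one>\<^bsub>G j\<^esub>)"
      then have "f = \<one>\<^bsub>?G\<^esub>"
        using f(1) A_carrier one_closed by (intro PiE_ext[of f I "\<lambda>i. carrier (G i)"]) auto
      with f(2) show False ..
    qed
    then obtain j where j: "j \<in> I" "f j \<noteq> \<one>\<^bsub>G j\<^esub>" by blast
    have "A\<^sub>i j \<noteq> {\<one>\<^bsub>G j\<^esub>}" using f j by (auto simp: A\<^sub>i_def)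
    then have strict_j: "card (C\<^sub>i j) * card (A\<^sub>i j) < card (carrier (G j))"
      using group.property_A_iff_card_centralizer[OF groups[OF j(1)] finite[OF j(1)]]
        property_A[OF j(1)] normal_i[OF j(1)] abelian_i[OF j(1)]
      unfolding C\<^sub>i_def order_def by blast
    have finite_C\<^sub>i: "finite (C\<^sub>i i)" if "i \<in> I" for i
      using finite[OF that] by (rule rev_finite_subset) (auto simp: C\<^sub>i_def centralizer_def)
    have finite_A\<^sub>i: "finite (A\<^sub>i i)" for i
      using finite_G A_carrier finite_subset unfolding A\<^sub>i_def by blast
    have A_subset: "A \<subseteq> (\<Pi>\<^sub>E i\<in>I. A\<^sub>i i)"
    proof
      fix f assume "f \<in> A"
      then show "f \<in> (\<Pi>\<^sub>E i\<in>I. A\<^sub>i i)" using A_carrier by (auto simp: A\<^sub>i_def PiE_def)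
    qed
    have "card (centralizer ?G A) \<le> (\<Prod>i\<in>I. card (C\<^sub>i i))"
      using card_mono[OF finite_PiE[where T = C\<^sub>i, OF assms(1) finite_C\<^sub>i]
          centralizer_product_group_subset[OF A_carrier, folded A\<^sub>i_def C\<^sub>i_def]]
      by (simp add: card_PiE assms(1))
    moreover have "card A \<le> (\<Prod>i\<in>I. card (A\<^sub>i i))"
      using card_mono[OF finite_PiE[where T = A\<^sub>i, OF assms(1) finite_A\<^sub>i] A_subset]
      by (simp add: card_PiE assms(1))
    ultimately have "card (centralizer ?G A) * card A \<le> (\<Prod>i\<in>I. card (C\<^sub>i i) * card (A\<^sub>i i))"
      by (simp add: prod.distrib mult_le_mono)
    also have "\<dots> < (\<Prod>i\<in>I. card (carrier (G i)))"
    proof (rule prod_mono_strict[where i = j])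
      show "0 < card (carrier (G i))" if "i \<in> I" for i
        using monoid.order_gt_0_iff_finite[OF group.is_monoid[OF groups]] finite that
        unfolding order_def by blast
    qed (use j strict_j bound_i assms(1) in auto)
    finally show ?thesis using assms(1) by (simp add: order_def card_PiE)
  qed
  then show ?thesis using property_A_iff_card_centralizer[OF finite_G] by blast
qed

lemma carrier_semidirect [simp]: "carrier (semidirect V H) = carrier V \<times> H"
  by (simp add: semidirect_def)

lemma mult_semidirect [simp]:
  "(v, h) \<otimes>\<^bsub>semidirect V H\<^esub> (w, k) = (v \<otimes>\<^bsub>V\<^esub> h w, compose (carrier V) h k)"
  by (simp add: semidirect_def)

lemma one_semidirect: "\<one>\<^bsub>semidirect V H\<^esub> = (\<one>\<^bsub>V\<^esub>, \<lambda>x\<in>carrier V. x)"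
  by (simp add: semidirect_def id_def)

locale aut_semidirect = V: group V
  for V :: "('a, 'b) monoid_scheme" and H :: "('a \<Rightarrow> 'a) set" +
  assumes subgroup_AutoGroup: "subgroup H (AutoGroup V)"
begin

sublocale Aut: group "AutoGroup V" by (rule V.AutoGroup)

abbreviation S where "S \<equiv> semidirect V H"

lemma mem_auto: "h \<in> H \<Longrightarrow> h \<in> auto V"
  using subgroup.subset[OF subgroup_AutoGroup] by (auto simp: AutoGroup_def)

lemma mem_hom: "h \<in> H \<Longrightarrow> h \<in> hom V V"
  using mem_auto by (simp add: auto_def)

lemma apply_closed: "h \<in> H \<Longrightarrow> x \<in> carrier V \<Longrightarrow> h x \<in> carrier V"
  using mem_hom by (auto simp: hom_def)

lemma apply_mult:
  "h \<in> H \<Longrightarrow> x \<in> carrier V \<Longrightarrow> y \<in> carrier V \<Longrightarrow> h (x \<otimes>\<^bsub>V\<^esub> y) = h x \<otimes>\<^bsub>V\<^esub> h y"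
  using mem_hom by (simp add: hom_mult)

lemma compose_eq_mult:
  "h \<in> H \<Longrightarrow> k \<in> H \<Longrightarrow> compose (carrier V) h k = h \<otimes>\<^bsub>AutoGroup V\<^esub> k"
  using mem_auto by (simp add: AutoGroup_def BijGroup_def auto_def)

lemma one_AutoGroup: "\<one>\<^bsub>AutoGroup V\<^esub> = (\<lambda>x\<in>carrier V. x)"
  by (simp add: AutoGroup_def BijGroup_def)

lemma AutoGroup_mem: "h \<in> H \<Longrightarrow> h \<in> carrier (AutoGroup V)"
  using subgroup.subset[OF subgroup_AutoGroup] by blast

lemma mult_mem: "h \<in> H \<Longrightarrow> k \<in> H \<Longrightarrow> h \<otimes>\<^bsub>AutoGroup V\<^esub> k \<in> H"
  by (rule subgroup.m_closed[OF subgroup_AutoGroup])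

lemma mult_closed: "h \<in> H \<Longrightarrow> k \<in> H \<Longrightarrow> compose (carrier V) h k \<in> H"
  by (simp add: compose_eq_mult mult_mem)

lemma one_AutoGroup_apply: "v \<in> carrier V \<Longrightarrow> \<one>\<^bsub>AutoGroup V\<^esub> v = v"
  by (simp add: one_AutoGroup)

lemma one_mem: "\<one>\<^bsub>AutoGroup V\<^esub> \<in> H"
  by (rule subgroup.one_closed[OF subgroup_AutoGroup])

lemma eq_one_AutoGroupI:
  "h \<in> H \<Longrightarrow> (\<And>w. w \<in> carrier V \<Longrightarrow> h w = w) \<Longrightarrow> h = \<one>\<^bsub>AutoGroup V\<^esub>"
  using mem_auto by (force simp: one_AutoGroup auto_def Bij_def extensional_def)

lemma one_S [simp]: "\<one>\<^bsub>S\<^esub> = (\<one>\<^bsub>V\<^esub>, \<one>\<^bsub>AutoGroup V\<^esub>)"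
  by (simp add: one_semidirect one_AutoGroup)

lemma group_semidirect: "group S"
proof (rule groupI)
  fix x y assume "x \<in> carrier S" "y \<in> carrier S"
  then show "x \<otimes>\<^bsub>S\<^esub> y \<in> carrier S" by (auto simp: apply_closed mult_closed)
next
  show "\<one>\<^bsub>S\<^esub> \<in> carrier S" using one_mem by simp
next
  fix x y z assume "x \<in> carrier S" "y \<in> carrier S" "z \<in> carrier S"
  then obtain u h v k w l where xyz: "x = (u, h)" "y = (v, k)" "z = (w, l)"
    and mem: "u \<in> carrier V" "v \<in> carrier V" "w \<in> carrier V" "h \<in> H" "k \<in> H" "l \<in> H"
    by auto
  have "compose (carrier V) h k w = h (k w)" using mem by (simp add: compose_eq)
  then show "x \<otimes>\<^bsub>S\<^esub> y \<otimes>\<^bsub>S\<^esub> z = x \<otimes>\<^bsub>S\<^esub> (y \<otimes>\<^bsub>S\<^esub> z)"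
    using mem by (simp add: xyz compose_eq_mult mult_mem apply_closed apply_mult AutoGroup_mem
        V.m_assoc Aut.m_assoc)
next
  fix x assume "x \<in> carrier S"
  then obtain v h where x: "x = (v, h)" "v \<in> carrier V" "h \<in> H" by auto
  then show "\<one>\<^bsub>S\<^esub> \<otimes>\<^bsub>S\<^esub> x = x"
    by (simp add: compose_eq_mult one_mem AutoGroup_mem one_AutoGroup_apply)
next
  fix x assume "x \<in> carrier S"
  then obtain v h where x: "x = (v, h)" "v \<in> carrier V" "h \<in> H" by auto
  let ?k = "inv\<^bsub>AutoGroup V\<^esub> h"
  have k: "?k \<in> H" using x subgroup.m_inv_closed[OF subgroup_AutoGroup] by blast
  have "(?k (inv\<^bsub>V\<^esub> v), ?k) \<otimes>\<^bsub>S\<^esub> x = \<one>\<^bsub>S\<^esub>"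
    using x k hom_one[OF mem_hom V.is_group V.is_group]
    by (simp add: compose_eq_mult apply_closed AutoGroup_mem flip: apply_mult)
  moreover have "(?k (inv\<^bsub>V\<^esub> v), ?k) \<in> carrier S" using x k by (simp add: apply_closed)
  ultimately show "\<exists>y\<in>carrier S. y \<otimes>\<^bsub>S\<^esub> x = \<one>\<^bsub>S\<^esub>" by blast
qed

sublocale S: group S by (rule group_semidirect)

lemma snd_hom: "snd \<in> hom S (AutoGroup V)"
  by (auto simp: hom_def compose_eq_mult AutoGroup_mem)

definition translation :: "'a \<Rightarrow> 'a \<times> ('a \<Rightarrow> 'a)" where
  "translation w = (w, \<one>\<^bsub>AutoGroup V\<^esub>)"

lemma translation_closed: "w \<in> carrier V \<Longrightarrow> translation w \<in> carrier S"
  by (simp add: translation_def one_mem)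

lemma translation_mult:
  "v \<in> carrier V \<Longrightarrow> w \<in> carrier V \<Longrightarrow> translation v \<otimes>\<^bsub>S\<^esub> translation w = translation (v \<otimes>\<^bsub>V\<^esub> w)"
  by (simp add: translation_def compose_eq_mult one_mem one_AutoGroup_apply)

lemma inv_translation:
  assumes "w \<in> carrier V"
  shows "inv\<^bsub>S\<^esub> (translation w) = translation (inv\<^bsub>V\<^esub> w)"
proof (rule S.inv_equality)
  show "translation (inv\<^bsub>V\<^esub> w) \<otimes>\<^bsub>S\<^esub> translation w = \<one>\<^bsub>S\<^esub>"
    using assms by (simp add: translation_mult) (simp add: translation_def)
qed (use assms translation_closed in auto)

lemma conj_translation:
  assumes "h \<in> H" "w \<in> carrier V"
  shows "(\<one>\<^bsub>V\<^esub>, h) \<otimes>\<^bsub>S\<^esub> translation w \<otimes>\<^bsub>S\<^esub> inv\<^bsub>S\<^esub> (\<one>\<^bsub>V\<^esub>, h) = translation (h w)"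
proof -
  have h: "(\<one>\<^bsub>V\<^esub>, h) \<in> carrier S" and hw: "translation (h w) \<in> carrier S"
    using assms translation_closed apply_closed by auto
  have "(\<one>\<^bsub>V\<^esub>, h) \<otimes>\<^bsub>S\<^esub> translation w = translation (h w) \<otimes>\<^bsub>S\<^esub> (\<one>\<^bsub>V\<^esub>, h)"
    using assms
    by (simp add: translation_def compose_eq_mult one_mem AutoGroup_mem apply_closed one_AutoGroup_apply)
  then show ?thesis
    using S.inv_solve_right'[OF hw S.m_closed[OF h translation_closed[OF assms(2)]] h] by blast
qed

end

locale irreducible_aut_semidirect = aut_semidirect V H + V: comm_group V for V H +
  assumes irreducible: "acts_irreducibly V H"
begin

lemma translation_part_trivial_or_all:
  assumes "N \<lhd> S"
  shows "{w \<in> carrier V. translation w \<in> N} = {\<one>\<^bsub>V\<^esub>}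
    \<or> {w \<in> carrier V. translation w \<in> N} = carrier V"
proof -
  interpret N: normal N S by (rule assms)
  let ?M = "{w \<in> carrier V. translation w \<in> N}"
  have "subgroup ?M V"
  proof
    fix v w assume "v \<in> ?M" "w \<in> ?M"
    then show "v \<otimes>\<^bsub>V\<^esub> w \<in> ?M" using N.m_closed by (simp flip: translation_mult)
  next
    fix w assume "w \<in> ?M"
    then show "inv\<^bsub>V\<^esub> w \<in> ?M" using N.m_inv_closed by (simp flip: inv_translation)
  qed (use N.one_closed in \<open>auto simp: translation_def\<close>)
  moreover have "h ` ?M \<subseteq> ?M" if h: "h \<in> H" for h
  proof
    fix x assume "x \<in> h ` ?M"
    then obtain w where w: "w \<in> carrier V" "translation w \<in> N" "x = h w" by blast
    have "(\<one>\<^bsub>V\<^esub>, h) \<otimes>\<^bsub>S\<^esub> translation w \<otimes>\<^bsub>S\<^esub> inv\<^bsub>S\<^esub> (\<one>\<^bsub>V\<^esub>, h) \<in> N"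
      using h w by (intro N.inv_op_closed2) simp_all
    then show "x \<in> ?M" using h w by (simp add: conj_translation apply_closed)
  qed
  ultimately show ?thesis using irreducible unfolding acts_irreducibly_def by blast
qed

lemma commutes_with_translation_iff:
  assumes "v \<in> carrier V" "h \<in> H" "w \<in> carrier V"
  shows "(v, h) \<otimes>\<^bsub>S\<^esub> translation w = translation w \<otimes>\<^bsub>S\<^esub> (v, h) \<longleftrightarrow> h w = w"
  using assms V.m_comm[of w v]
  by (simp add: translation_def compose_eq_mult one_mem AutoGroup_mem one_AutoGroup_apply apply_closed)

lemma translation_if_commutes_with_translations:
  assumes "g \<in> carrier S" "\<And>w. w \<in> carrier V \<Longrightarrow> g \<otimes>\<^bsub>S\<^esub> translation w = translation w \<otimes>\<^bsub>S\<^esub> g"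
  shows "g \<in> translation ` carrier V"
proof -
  obtain v h where g: "g = (v, h)" "v \<in> carrier V" "h \<in> H" using assms(1) by auto
  then have "h = \<one>\<^bsub>AutoGroup V\<^esub>"
    using assms(2) by (intro eq_one_AutoGroupI) (simp_all add: commutes_with_translation_iff)
  then show ?thesis using g by (auto simp: translation_def)
qed

lemma abelian_normal_commutes_with_translations:
  assumes N: "N \<lhd> S" and abelian: "\<forall>x\<in>N. \<forall>y\<in>N. x \<otimes>\<^bsub>S\<^esub> y = y \<otimes>\<^bsub>S\<^esub> x"
    and g: "g \<in> N" and w: "w \<in> carrier V"
  shows "g \<otimes>\<^bsub>S\<^esub> translation w = translation w \<otimes>\<^bsub>S\<^esub> g"
proof -
  interpret N: normal N S by (rule N)
  consider "{w \<in> carrier V. translation w \<in> N} = carrier V"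
    | "{w \<in> carrier V. translation w \<in> N} = {\<one>\<^bsub>V\<^esub>}"
    using translation_part_trivial_or_all[OF N] by blast
  then show ?thesis
  proof cases
    case 1
    then show ?thesis using abelian g w by blast
  next
    case 2
    let ?t = "translation w"
    define c where "c = ?t \<otimes>\<^bsub>S\<^esub> g \<otimes>\<^bsub>S\<^esub> inv\<^bsub>S\<^esub> ?t \<otimes>\<^bsub>S\<^esub> inv\<^bsub>S\<^esub> g"
    have t: "?t \<in> carrier S" using w by (rule translation_closed)
    have "c \<in> N" unfolding c_def using t g by (intro N.m_closed N.inv_op_closed2 N.m_inv_closed)
    moreover have "snd c = \<one>\<^bsub>AutoGroup V\<^esub>"
    proof -
      interpret group_hom S "AutoGroup V" snd
        by (simp add: group_hom_def group_hom_axioms_def S.is_group Aut.is_group snd_hom)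
      have "snd ?t = \<one>\<^bsub>AutoGroup V\<^esub>" by (simp add: translation_def)
      then show ?thesis using t g N.subset by (auto simp del: carrier_semidirect simp: c_def)
    qed
    ultimately have "c = translation \<one>\<^bsub>V\<^esub>"
      using 2 N.subset by (cases c) (auto simp: translation_def)
    then have "?t \<otimes>\<^bsub>S\<^esub> g = g \<otimes>\<^bsub>S\<^esub> ?t"
      using t g N.subset by (intro S.commutator_eq_one_imp_commute) (auto simp: c_def translation_def)
    then show ?thesis by simp
  qed
qed

lemma abelian_normal_subset_translations:
  assumes "N \<lhd> S" "\<forall>x\<in>N. \<forall>y\<in>N. x \<otimes>\<^bsub>S\<^esub> y = y \<otimes>\<^bsub>S\<^esub> x"
  shows "N \<subseteq> translation ` carrier V"
  using assms abelian_normal_commutes_with_translations normal_imp_subgroup[OF assms(1)]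
  by (blast intro: translation_if_commutes_with_translations dest: subgroup.mem_carrier)

lemma centralizer_abelian_normal_subset_translations:
  assumes N: "N \<lhd> S" and abelian: "\<forall>x\<in>N. \<forall>y\<in>N. x \<otimes>\<^bsub>S\<^esub> y = y \<otimes>\<^bsub>S\<^esub> x"
    and nontrivial: "N \<noteq> {\<one>\<^bsub>S\<^esub>}"
  shows "centralizer S N \<subseteq> translation ` carrier V"
proof -
  interpret N: normal N S by (rule N)
  obtain g where "g \<in> N" "g \<noteq> \<one>\<^bsub>S\<^esub>" using nontrivial N.one_closed by blast
  moreover obtain v where "v \<in> carrier V" "g = translation v"
    using abelian_normal_subset_translations[OF N abelian] \<open>g \<in> N\<close> by blast
  ultimately have "{w \<in> carrier V. translation w \<in> N} \<noteq> {\<one>\<^bsub>V\<^esub>}"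
    by (auto simp: translation_def)
  then have "translation w \<in> N" if "w \<in> carrier V" for w
    using translation_part_trivial_or_all[OF N] that by blast
  then show ?thesis
    by (auto simp: centralizer_def intro!: translation_if_commutes_with_translations)
qed

lemma property_A_semidirect:
  assumes "finite (carrier V)" and "card (carrier V) < card H"
  shows "property_A S"
proof -
  have "finite H" using assms(2) card.infinite by fastforce
  then have finite_S: "finite (carrier S)" using assms(1) by simp
  have card_translations: "card (translation ` carrier V) = card (carrier V)"
    by (rule card_image) (auto simp: inj_on_def translation_def)
  have "card (centralizer S N) * card N < order S"
    if N: "N \<lhd> S" and abelian: "\<forall>x\<in>N. \<forall>y\<in>N. x \<otimes>\<^bsub>S\<^esub> y = y \<otimes>\<^bsub>S\<^esub> x"
      and nontrivial: "N \<noteq> {\<one>\<^bsub>S\<^esub>}" for N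
  proof -
    have finite_translations: "finite (translation ` carrier V)" using assms(1) by simp
    have "card (centralizer S N) \<le> card (carrier V)"
      using card_mono[OF finite_translations] card_translations
        centralizer_abelian_normal_subset_translations[OF N abelian nontrivial] by simp
    moreover have "card N \<le> card (carrier V)"
      using card_mono[OF finite_translations] card_translations
        abelian_normal_subset_translations[OF N abelian] by simp
    ultimately have "card (centralizer S N) * card N \<le> card (carrier V) * card (carrier V)"
      by (rule mult_le_mono)
    also have "\<dots> < card (carrier V) * card H"
      using assms V.one_closed card_gt_0_iff by fastforce
    finally show ?thesis by (simp add: order_def card_cartesian_product)
  qed
  then show ?thesis using S.property_A_iff_card_centralizer[OF finite_S] by blast
qed

end

lemma irreducible_aut_semidirect_if_type1_primitive:
  assumes "type1_primitive_data V H"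
  shows "irreducible_aut_semidirect V H"
  using assms
  by (intro irreducible_aut_semidirect.intro aut_semidirect.intro aut_semidirect_axioms.intro
      irreducible_aut_semidirect_axioms.intro)
    (auto simp: type1_primitive_data_def elementary_abelian_def intro: comm_group.axioms)

theorem proposition1:
  fixes n :: nat
    and V :: "nat \<Rightarrow> ('a, 'b) monoid_scheme"
    and H :: "nat \<Rightarrow> ('a \<Rightarrow> 'a) set"
  assumes "\<And>i. i < n \<Longrightarrow> type1_primitive_data (V i) (H i)"
    and "\<And>i. i < n \<Longrightarrow> card (H i) > card (carrier (V i))"
  shows "property_A (product_group {..<n} (\<lambda>i. semidirect (V i) (H i)))"
proof (rule property_A_product_group)
  fix i assume "i \<in> {..<n}"
  then have primitive: "type1_primitive_data (V i) (H i)"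
    and card: "card (carrier (V i)) < card (H i)" using assms by auto
  interpret irreducible_aut_semidirect "V i" "H i"
    using primitive by (rule irreducible_aut_semidirect_if_type1_primitive)
  have "finite (carrier (V i))"
    using primitive by (simp add: type1_primitive_data_def elementary_abelian_def)
  moreover have "finite (H i)" using card card.infinite by fastforce
  ultimately show "finite (carrier (semidirect (V i) (H i)))" by simp
  show "group (semidirect (V i) (H i))" by (rule group_semidirect)
  show "property_A (semidirect (V i) (H i))"
    using \<open>finite (carrier (V i))\<close> card by (rule property_A_semidirect)
qed simp

end
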